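(* Let $n\ge 4$, $t\ge 1$, and $l_1,\dots,l_t\ge 1$ be integers, and put $n'=\sum_{i=1}^{t}(l_i-1)$; assume $n-n'\ge 3$. Then the chordless cycle $C_n$ has an IP-SEG representation with exactly $t$ interval arcs, of lengths $l_1,\dots,l_t$, if and only if $C_{n-n'}$ has an IP-SEG representation with exactly $t$ interval arcs, each of length $1$.
   Context: Let $L_1$ and $L_2$ be two distinct parallel horizontal lines in the plane. A closed straight line segment is an interval segment if both of its endpoints lie on the same line $L_i$, and a permutation segment if one endpoint lies on $L_1$ and the other on $L_2$. An IP-SEG model is a finite family of interval and permutation segments; its intersection graph has one vertex per segment, adjacent iff the segments intersect. For $m\ge 3$, $C_m$ is the chordless cycle on $v_1,\dots,v_m$ with $v_i$ adjacent to $v_{i+1}$ (indices mod $m$) and no other edges. An IP-SEG representation of $C_m$ is an IP-SEG model with segments $s(v_1),\dots,s(v_m)$ whose intersection graph is $C_m$ with $s(v_i)$ corresponding to $v_i$. If such a representation contains both interval and permutation segments, an interval arc is a maximal sequence $s(v_i),s(v_{i+1}),\dots,s(v_j)$ of cyclically consecutive segments that are all interval segments (so $s(v_{i-1})$ and $s(v_{j+1})$ are permutation segments, indices mod $m$); its length is the number of segments in it. Permutation arcs are defined analogously. *)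

theory Defs
  imports "HOL-Analysis.Analysis" "HOL-Library.Multiset"
begin

text \<open>The two distinct parallel
horizontal lines are L1 = {y = a} and L2 = {y = b} with a \<noteq> b.\<close>

type_synonym pt = "real \<times> real"
type_synonym seg = "pt \<times> pt"

definition seg_set :: "seg \<Rightarrow> pt set" where
  "seg_set s = closed_segment (fst s) (snd s)"

definition interval_seg :: "real \<Rightarrow> real \<Rightarrow> seg \<Rightarrow> bool" where
  "interval_seg a b s \<longleftrightarrow>
     (snd (fst s) = a \<and> snd (snd s) = a) \<or> (snd (fst s) = b \<and> snd (snd s) = b)"

definition perm_seg :: "real \<Rightarrow> real \<Rightarrow> seg \<Rightarrow> bool" where
  "perm_seg a b s \<longleftrightarrow>
     (snd (fst s) = a \<and> snd (snd s) = b) \<or> (snd (fst s) = b \<and> snd (snd s) = a)"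

definition cycle_adj :: "nat \<Rightarrow> nat \<Rightarrow> nat \<Rightarrow> bool" where
  "cycle_adj m i j \<longleftrightarrow> j = (i + 1) mod m \<or> i = (j + 1) mod m"

definition ipseg_rep_cycle :: "real \<Rightarrow> real \<Rightarrow> nat \<Rightarrow> (nat \<Rightarrow> seg) \<Rightarrow> bool" where
  "ipseg_rep_cycle a b m s \<longleftrightarrow>
     (\<forall>i<m. interval_seg a b (s i) \<or> perm_seg a b (s i)) \<and>
     (\<forall>i<m. \<forall>j<m. i \<noteq> j \<longrightarrow>
        (seg_set (s i) \<inter> seg_set (s j) \<noteq> {} \<longleftrightarrow> cycle_adj m i j))"

text \<open>(i, k): an interval arc starting at vertex i of length k, i.e. the maximal run
s i, s (i+1), ..., s (i+k-1) (indices mod m) of interval segments.\<close>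
definition interval_arc :: "real \<Rightarrow> real \<Rightarrow> nat \<Rightarrow> (nat \<Rightarrow> seg) \<Rightarrow> nat \<Rightarrow> nat \<Rightarrow> bool" where
  "interval_arc a b m s i k \<longleftrightarrow>
     i < m \<and> 1 \<le> k \<and>
     (\<forall>j<k. interval_seg a b (s ((i + j) mod m))) \<and>
     perm_seg a b (s ((i + m - 1) mod m)) \<and>
     perm_seg a b (s ((i + k) mod m))"

definition interval_arcs :: "real \<Rightarrow> real \<Rightarrow> nat \<Rightarrow> (nat \<Rightarrow> seg) \<Rightarrow> (nat \<times> nat) set" where
  "interval_arcs a b m s = {(i, k). interval_arc a b m s i k}"

definition has_rep_with_interval_arcs :: "real \<Rightarrow> real \<Rightarrow> nat \<Rightarrow> nat list \<Rightarrow> bool" where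
  "has_rep_with_interval_arcs a b m ls \<longleftrightarrow>
     (\<exists>s. ipseg_rep_cycle a b m s \<and>
          (\<exists>i<m. interval_seg a b (s i)) \<and> (\<exists>i<m. perm_seg a b (s i)) \<and>
          card (interval_arcs a b m s) = length ls \<and>
          image_mset snd (mset_set (interval_arcs a b m s)) = mset ls)"

end

theory Submission
  imports Defs
begin

text \<open>
  Lengthening one interval arc by a single segment turns a representation of C(m) into one of
  C(m + 1) with all other arcs unchanged, and conversely; iterating on every arc gives the
  theorem.  Shortening: the last two segments of an arc are intersecting interval segments,
  hence lie on one line, and their union is again an interval segment meeting exactly the
  neighbours of the pair.  Lengthening: the last segment X of an arc meets its predecessor J and
  the permutation segment K after it, and for m \<ge> 4 these two are disjoint.  Both meet the line
  of X in closed intervals, so cutting X at a point strictly between them gives two overlapping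
  pieces, one meeting only J and the other only K.  For m = 3 there is only a single arc of
  length 1, and C(4) with one arc of length 2 is drawn by hand.
\<close>

section \<open>Segments between two horizontal lines\<close>

definition line_trace :: "real \<Rightarrow> seg \<Rightarrow> real set" where
  "line_trace c s = {x. (x, c) \<in> seg_set s}"

lemma seg_set_horizontal:
  "seg_set ((x0, c), (x1, c)) = {p. snd p = c \<and> fst p \<in> closed_segment x0 x1}"
  by (force simp: seg_set_def in_segment algebra_simps)

lemma closed_segment_real_min_max:
  fixes x0 x1 :: real
  shows "closed_segment x0 x1 = {min x0 x1..max x0 x1}"
  by (simp add: closed_segment_eq_real_ivl min_def max_def)

lemma line_trace_horizontal: "line_trace c ((x0, c), (x1, c)) = closed_segment x0 x1"
  by (simp add: line_trace_def seg_set_horizontal)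

lemma line_trace_other_line: "d \<noteq> c \<Longrightarrow> line_trace c ((x0, d), (x1, d)) = {}"
  by (simp add: line_trace_def seg_set_horizontal)

lemma line_trace_transversal:
  assumes "c \<noteq> d"
  shows "line_trace c ((x0, c), (x1, d)) = {x0}"
proof -
  have "x = x0" if mem: "(x, c) \<in> closed_segment (x0, c) (x1, d)" for x
  proof -
    obtain u where "(x, c) = (1 - u) *\<^sub>R (x0, c) + u *\<^sub>R (x1, d)"
      using mem unfolding in_segment by blast
    then have "x = (1 - u) * x0 + u * x1" "u = 0 \<or> c = d"
      by (simp_all add: algebra_simps)
    with assms show ?thesis by simp
  qed
  then show ?thesis by (auto simp: line_trace_def seg_set_def)
qed

lemma line_trace_swap: "line_trace c (q, p) = line_trace c (p, q)"
  by (simp add: line_trace_def seg_set_def closed_segment_commute)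

lemma line_trace_interval:
  assumes "a \<noteq> b" "interval_seg a b s \<or> perm_seg a b s" "c = a \<or> c = b"
  shows "\<exists>lo hi. line_trace c s = {lo..hi}"
proof -
  obtain x0 y0 x1 y1 where s: "s = ((x0, y0), (x1, y1))"
    by (metis prod.collapse)
  consider "y0 = c" "y1 = c" | "y0 = c" "y1 \<noteq> c" | "y0 \<noteq> c" "y1 = c" | "y0 = y1" "y0 \<noteq> c"
    using assms by (auto simp: s interval_seg_def perm_seg_def)
  then show ?thesis
  proof cases
    case 1
    then have "line_trace c s = {min x0 x1..max x0 x1}"
      by (simp add: s line_trace_horizontal closed_segment_real_min_max)
    then show ?thesis by blast
  next
    case 2
    then show ?thesis
      using line_trace_transversal[of c y1 x0 x1] by (simp add: s) (metis atLeastAtMost_singleton)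
  next
    case 3
    then show ?thesis
      using line_trace_transversal[of c y0 x1 x0] line_trace_swap[of c]
      by (simp add: s) (metis atLeastAtMost_singleton)
  next
    case 4
    then have "line_trace c s = {1..0}"
      using line_trace_other_line[of y0 c x0 x1] by (simp add: s)
    then show ?thesis by blast
  qed
qed

lemma horizontal_Int_eq_empty_iff:
  "seg_set ((x0, c), (x1, c)) \<inter> seg_set s = {} \<longleftrightarrow> closed_segment x0 x1 \<inter> line_trace c s = {}"
  by (force simp: seg_set_horizontal line_trace_def)

lemma horizontal_subset_iff:
  "seg_set ((x0, c), (x1, c)) \<subseteq> seg_set ((y0, c), (y1, c)) \<longleftrightarrow>
   closed_segment x0 x1 \<subseteq> closed_segment y0 y1"
proof
  assume sub: "seg_set ((x0, c), (x1, c)) \<subseteq> seg_set ((y0, c), (y1, c))"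
  show "closed_segment x0 x1 \<subseteq> closed_segment y0 y1"
  proof
    fix x assume "x \<in> closed_segment x0 x1"
    then have "(x, c) \<in> seg_set ((x0, c), (x1, c))"
      by (simp add: seg_set_horizontal)
    with sub have "(x, c) \<in> seg_set ((y0, c), (y1, c))"
      by blast
    then show "x \<in> closed_segment y0 y1"
      by (simp add: seg_set_horizontal)
  qed
qed (auto simp: seg_set_horizontal)

lemma interval_seg_not_perm_seg: "a \<noteq> b \<Longrightarrow> interval_seg a b s \<Longrightarrow> \<not> perm_seg a b s"
  by (auto simp: interval_seg_def perm_seg_def)

lemma interval_segE:
  assumes "interval_seg a b s"
  obtains x0 x1 c where "s = ((x0, c), (x1, c))" "c = a \<or> c = b"
  using assms unfolding interval_seg_def by (metis prod.collapse)

lemma interval_seg_horizontal: "c = a \<or> c = b \<Longrightarrow> interval_seg a b ((x0, c), (x1, c))"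
  by (auto simp: interval_seg_def)

lemma interval_seg_union:
  assumes "interval_seg a b X" "interval_seg a b Y" "seg_set X \<inter> seg_set Y \<noteq> {}"
  obtains Z where "interval_seg a b Z" "seg_set Z = seg_set X \<union> seg_set Y"
proof -
  obtain x0 x1 c where X: "X = ((x0, c), (x1, c))" "c = a \<or> c = b"
    using assms(1) by (rule interval_segE)
  obtain y0 y1 e where Y: "Y = ((y0, e), (y1, e))"
    using assms(2) by (rule interval_segE)
  have "e = c"
    using assms(3) by (auto simp: X Y seg_set_horizontal)
  define lo where "lo = min (min x0 x1) (min y0 y1)"
  define hi where "hi = max (max x0 x1) (max y0 y1)"
  have "closed_segment x0 x1 \<inter> closed_segment y0 y1 \<noteq> {}"
    using assms(3) by (auto simp: X Y \<open>e = c\<close> seg_set_horizontal)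
  then have "closed_segment lo hi = closed_segment x0 x1 \<union> closed_segment y0 y1"
    unfolding lo_def hi_def closed_segment_real_min_max by (auto simp: min_def max_def)
  then have "seg_set ((lo, c), (hi, c)) = seg_set X \<union> seg_set Y"
    by (auto simp: X Y \<open>e = c\<close> seg_set_horizontal)
  with X(2) that show ?thesis
    using interval_seg_horizontal by blast
qed

definition splits_between :: "seg \<Rightarrow> seg \<Rightarrow> seg \<Rightarrow> seg \<Rightarrow> seg \<Rightarrow> bool" where
  "splits_between X J K X1 X2 \<longleftrightarrow>
     seg_set X1 \<subseteq> seg_set X \<and> seg_set X2 \<subseteq> seg_set X \<and> seg_set X1 \<inter> seg_set X2 \<noteq> {} \<and>
     seg_set X1 \<inter> seg_set J \<noteq> {} \<and> seg_set X1 \<inter> seg_set K = {} \<and>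
     seg_set X2 \<inter> seg_set K \<noteq> {} \<and> seg_set X2 \<inter> seg_set J = {}"

lemma splits_between_swap: "splits_between X J K X1 X2 \<longleftrightarrow> splits_between X K J X2 X1"
  unfolding splits_between_def by blast

lemma horizontal_splits_between:
  assumes X: "X = ((x0, c), (x1, c))"
    and J: "line_trace c J = {j1..j2}" and K: "line_trace c K = {k1..k2}" and "j2 < k1"
    and xj: "xj \<in> closed_segment x0 x1 \<inter> line_trace c J"
    and xk: "xk \<in> closed_segment x0 x1 \<inter> line_trace c K"
  shows "\<exists>y. splits_between X J K ((min x0 x1, c), (y, c)) ((y, c), (max x0 x1, c))"
proof -
  define y where "y = (j2 + k1) / 2"
  have ord: "min x0 x1 \<le> xj" "xj \<le> j2" "j2 < y" "y < k1" "k1 \<le> xk" "xk \<le> max x0 x1"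
    using assms by (auto simp: y_def closed_segment_real_min_max)
  then have seg1: "closed_segment (min x0 x1) y = {min x0 x1..y}"
    and seg2: "closed_segment y (max x0 x1) = {y..max x0 x1}"
    by (simp_all add: closed_segment_eq_real_ivl1)
  show ?thesis
    unfolding splits_between_def X horizontal_subset_iff
    using ord J K xj xk
    by (intro exI[of _ y]) (auto simp: seg1 seg2 horizontal_Int_eq_empty_iff
        closed_segment_real_min_max line_trace_horizontal)
qed

lemma interval_seg_split:
  assumes ab: "a \<noteq> b" and X: "interval_seg a b X"
    and J: "interval_seg a b J \<or> perm_seg a b J" and K: "interval_seg a b K \<or> perm_seg a b K"
    and XJ: "seg_set X \<inter> seg_set J \<noteq> {}" and XK: "seg_set X \<inter> seg_set K \<noteq> {}"
    and JK: "seg_set J \<inter> seg_set K = {}"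
  obtains X1 X2 where "interval_seg a b X1" "interval_seg a b X2" "splits_between X J K X1 X2"
proof -
  obtain x0 x1 c where X: "X = ((x0, c), (x1, c))" and c: "c = a \<or> c = b"
    using X by (rule interval_segE)
  obtain j1 j2 where trJ: "line_trace c J = {j1..j2}"
    using line_trace_interval[OF ab J c] by blast
  obtain k1 k2 where trK: "line_trace c K = {k1..k2}"
    using line_trace_interval[OF ab K c] by blast
  obtain xj where xj: "xj \<in> closed_segment x0 x1 \<inter> line_trace c J"
    using XJ unfolding X horizontal_Int_eq_empty_iff by blast
  obtain xk where xk: "xk \<in> closed_segment x0 x1 \<inter> line_trace c K"
    using XK unfolding X horizontal_Int_eq_empty_iff by blast
  have "line_trace c J \<inter> line_trace c K = {}"
    using JK by (auto simp: line_trace_def)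
  then have "j2 < k1 \<or> k2 < j1"
    using xj xk unfolding trJ trK by (auto simp: disjoint_iff)
  then obtain y where "splits_between X J K ((min x0 x1, c), (y, c)) ((y, c), (max x0 x1, c)) \<or>
      splits_between X J K ((y, c), (max x0 x1, c)) ((min x0 x1, c), (y, c))"
    using horizontal_splits_between[OF X trJ trK _ xj xk]
      horizontal_splits_between[OF X trK trJ _ xk xj] splits_between_swap by blast
  with that show ?thesis
    using interval_seg_horizontal[OF c] by blast
qed

section \<open>Representations of cycles and their interval arcs\<close>

lemma cycle_adj_iff:
  assumes "i < m" "j < m"
  shows "cycle_adj m i j \<longleftrightarrow> j = i + 1 \<or> i = j + 1 \<or> (i = 0 \<and> j = m - 1) \<or> (j = 0 \<and> i = m - 1)"
proof -
  have "(i + 1) mod m = (if i + 1 = m then 0 else i + 1)" "(j + 1) mod m = (if j + 1 = m then 0 else j + 1)"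
    using assms by auto
  then show ?thesis
    unfolding cycle_adj_def using assms by auto
qed

lemma cycle_adj_commute: "cycle_adj m i j = cycle_adj m j i"
  unfolding cycle_adj_def by blast

lemma ipseg_rep_cycle_seg_type:
  "ipseg_rep_cycle a b m s \<Longrightarrow> i < m \<Longrightarrow> interval_seg a b (s i) \<or> perm_seg a b (s i)"
  unfolding ipseg_rep_cycle_def by blast

lemma ipseg_rep_cycle_meets_iff:
  "ipseg_rep_cycle a b m s \<Longrightarrow> i < m \<Longrightarrow> j < m \<Longrightarrow> i \<noteq> j \<Longrightarrow>
   seg_set (s i) \<inter> seg_set (s j) \<noteq> {} \<longleftrightarrow> cycle_adj m i j"
  unfolding ipseg_rep_cycle_def by blast

lemma ipseg_rep_cycleI:
  assumes "\<And>i. i < m \<Longrightarrow> interval_seg a b (s i) \<or> perm_seg a b (s i)"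
    and "\<And>i j. i < j \<Longrightarrow> j < m \<Longrightarrow> seg_set (s i) \<inter> seg_set (s j) \<noteq> {} \<longleftrightarrow> cycle_adj m i j"
  shows "ipseg_rep_cycle a b m s"
  unfolding ipseg_rep_cycle_def
proof (intro conjI allI impI)
  fix i j assume "i < m" "j < m" "i \<noteq> j"
  then consider "i < j" | "j < i" by linarith
  then show "seg_set (s i) \<inter> seg_set (s j) \<noteq> {} \<longleftrightarrow> cycle_adj m i j"
    by cases (use assms(2)[of i j] assms(2)[of j i] \<open>i < m\<close> \<open>j < m\<close> in
        \<open>auto simp: Int_commute cycle_adj_commute\<close>)
qed (use assms(1) in blast)

definition interval_arc_lengths :: "real \<Rightarrow> real \<Rightarrow> nat \<Rightarrow> (nat \<Rightarrow> seg) \<Rightarrow> nat multiset" where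
  "interval_arc_lengths a b m s = image_mset snd (mset_set (interval_arcs a b m s))"

definition has_rep_with_arc_lengths :: "real \<Rightarrow> real \<Rightarrow> nat \<Rightarrow> nat multiset \<Rightarrow> bool" where
  "has_rep_with_arc_lengths a b m M \<longleftrightarrow>
     (\<exists>s. ipseg_rep_cycle a b m s \<and>
          (\<exists>i<m. interval_seg a b (s i)) \<and> (\<exists>i<m. perm_seg a b (s i)) \<and>
          interval_arc_lengths a b m s = M)"

lemma has_rep_with_interval_arcs_iff:
  "has_rep_with_interval_arcs a b m ls \<longleftrightarrow> has_rep_with_arc_lengths a b m (mset ls)"
proof -
  have "card A = length ls" if "image_mset snd (mset_set A) = mset ls" for A :: "(nat \<times> nat) set"
    by (metis that size_image_mset size_mset size_mset_set)
  then show ?thesis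
    unfolding has_rep_with_interval_arcs_def has_rep_with_arc_lengths_def interval_arc_lengths_def
    by blast
qed

lemma interval_arc_length_less:
  assumes "a \<noteq> b" "interval_arc a b m s i k"
  shows "k < m"
proof (rule ccontr)
  assume "\<not> k < m"
  moreover have "0 < m"
    using assms(2) by (simp add: interval_arc_def)
  ultimately have "k mod m < k"
    by (meson mod_less_divisor not_less less_le_trans)
  then have "interval_seg a b (s ((i + k mod m) mod m))"
    using assms(2) unfolding interval_arc_def by blast
  then have "interval_seg a b (s ((i + k) mod m))"
    by (simp add: mod_add_right_eq)
  then show False
    using assms interval_seg_not_perm_seg unfolding interval_arc_def by blast
qed

definition inner_arcs :: "real \<Rightarrow> real \<Rightarrow> (nat \<Rightarrow> seg) \<Rightarrow> nat \<Rightarrow> (nat \<times> nat) set" where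
  "inner_arcs a b s p =
     {(i, k). 1 \<le> i \<and> 1 \<le> k \<and> i + k \<le> p \<and> (\<forall>j<k. interval_seg a b (s (i + j))) \<and>
              perm_seg a b (s (i - 1)) \<and> perm_seg a b (s (i + k))}"

definition inner_arc_lengths :: "real \<Rightarrow> real \<Rightarrow> (nat \<Rightarrow> seg) \<Rightarrow> nat \<Rightarrow> nat multiset" where
  "inner_arc_lengths a b s p = image_mset snd (mset_set (inner_arcs a b s p))"

lemma finite_inner_arcs: "finite (inner_arcs a b s p)"
  by (rule finite_subset[of _ "{..p} \<times> {..p}"]) (auto simp: inner_arcs_def)

lemma inner_arc_lengths_cong:
  assumes "\<And>x. x \<le> p \<Longrightarrow> s' x = s x"
  shows "inner_arc_lengths a b s' p = inner_arc_lengths a b s p"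
proof -
  have "inner_arcs a b s' p = inner_arcs a b s p"
    unfolding inner_arcs_def using assms by (auto; force)
  then show ?thesis
    by (simp add: inner_arc_lengths_def)
qed

lemma inner_arcs_le_one: "p \<le> 1 \<Longrightarrow> inner_arcs a b s p = {}"
  by (auto simp: inner_arcs_def)

text \<open>Up to a cyclic shift, the arc to be shortened or lengthened occupies the positions
  after p; it can then be changed without touching the other arcs, which are the inner arcs.\<close>

definition final_interval_arc :: "real \<Rightarrow> real \<Rightarrow> nat \<Rightarrow> (nat \<Rightarrow> seg) \<Rightarrow> nat \<Rightarrow> bool" where
  "final_interval_arc a b m s p \<longleftrightarrow>
     p + 1 < m \<and> perm_seg a b (s 0) \<and> perm_seg a b (s p) \<and>
     (\<forall>x. p < x \<longrightarrow> x < m \<longrightarrow> interval_seg a b (s x))"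

lemma add_minus_one_mod: "i \<noteq> 0 \<Longrightarrow> i < m \<Longrightarrow> (i + m - 1) mod (m::nat) = i - 1"
  by (simp add: mod_if)

lemma interval_arc_final_cases:
  assumes ab: "a \<noteq> b" and F: "final_interval_arc a b m s p" and arc: "interval_arc a b m s i k"
  shows "(i, k) \<in> inner_arcs a b s p \<or> (i, k) = (p + 1, m - 1 - p)"
proof -
  have im: "i < m" and k1: "1 \<le> k" and I: "\<And>j. j < k \<Longrightarrow> interval_seg a b (s ((i + j) mod m))"
    and P1: "perm_seg a b (s ((i + m - 1) mod m))" and P2: "perm_seg a b (s ((i + k) mod m))"
    using arc unfolding interval_arc_def by auto
  have F0: "perm_seg a b (s 0)" and Fp: "perm_seg a b (s p)" and pm: "p + 1 < m"
    and Fi: "\<And>x. p < x \<Longrightarrow> x < m \<Longrightarrow> interval_seg a b (s x)"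
    using F unfolding final_interval_arc_def by auto
  have not_both: "\<not> (interval_seg a b (s x) \<and> perm_seg a b (s x))" for x
    using interval_seg_not_perm_seg[OF ab] by blast
  have "i \<noteq> 0"
  proof
    assume "i = 0"
    then have "interval_seg a b (s 0)"
      using I[of 0] k1 im by simp
    with F0 not_both show False by blast
  qed
  from P1 have P1': "perm_seg a b (s (i - 1))"
    unfolding add_minus_one_mod[OF \<open>i \<noteq> 0\<close> im] .
  show ?thesis
  proof (cases "i \<le> p")
    case True
    have "i + k \<le> p"
    proof (rule ccontr)
      assume "\<not> i + k \<le> p"
      then have "interval_seg a b (s p)"
        using I[of "p - i"] True pm by simp
      with Fp not_both show False by blast
    qed
    then have "(i, k) \<in> inner_arcs a b s p"
      using I P1' P2 k1 \<open>i \<noteq> 0\<close> pm by (auto simp: inner_arcs_def)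
    then show ?thesis ..
  next
    case False
    have "i = p + 1"
      using Fi[of "i - 1"] P1' False im not_both by (cases "i = p + 1") auto
    moreover have "i + k = m"
    proof (rule linorder_cases[of "i + k" m])
      assume "i + k < m"
      then show ?thesis
        using P2 Fi[of "i + k"] False not_both by simp
    next
      assume "m < i + k"
      then show ?thesis
        using I[of "m - i"] im F0 not_both by simp
    qed
    ultimately show ?thesis
      by auto
  qed
qed

lemma interval_arcs_final:
  assumes ab: "a \<noteq> b" and F: "final_interval_arc a b m s p"
  shows "interval_arcs a b m s = insert (p + 1, m - 1 - p) (inner_arcs a b s p)"
proof (intro equalityI subsetI)
  fix x assume "x \<in> interval_arcs a b m s"
  then show "x \<in> insert (p + 1, m - 1 - p) (inner_arcs a b s p)"
    using interval_arc_final_cases[OF ab F] by (auto simp: interval_arcs_def)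
next
  have pm: "p + 1 < m" and "perm_seg a b (s 0)" "perm_seg a b (s p)"
    and "\<And>x. p < x \<Longrightarrow> x < m \<Longrightarrow> interval_seg a b (s x)"
    using F unfolding final_interval_arc_def by auto
  then have "interval_arc a b m s (p + 1) (m - 1 - p)"
    by (auto simp: interval_arc_def)
  moreover have "interval_arc a b m s i k" if inner: "(i, k) \<in> inner_arcs a b s p" for i k
  proof -
    have "i \<noteq> 0" "i < m"
      using inner pm by (auto simp: inner_arcs_def)
    then show ?thesis
      using inner pm unfolding interval_arc_def add_minus_one_mod[OF \<open>i \<noteq> 0\<close> \<open>i < m\<close>]
      by (auto simp: inner_arcs_def)
  qed
  ultimately show "x \<in> interval_arcs a b m s" if "x \<in> insert (p + 1, m - 1 - p) (inner_arcs a b s p)" for x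
    using that by (auto simp: interval_arcs_def)
qed

lemma interval_arc_lengths_final:
  assumes "a \<noteq> b" "final_interval_arc a b m s p"
  shows "interval_arc_lengths a b m s = add_mset (m - 1 - p) (inner_arc_lengths a b s p)"
proof -
  have "(p + 1, m - 1 - p) \<notin> inner_arcs a b s p"
    by (simp add: inner_arcs_def)
  then show ?thesis
    by (simp add: interval_arc_lengths_def inner_arc_lengths_def interval_arcs_final[OF assms]
        finite_inner_arcs)
qed

definition cyclic_shift :: "nat \<Rightarrow> nat \<Rightarrow> (nat \<Rightarrow> seg) \<Rightarrow> nat \<Rightarrow> seg" where
  "cyclic_shift m r s j = s ((j + r) mod m)"

lemma mod_add_right_cancel: "((x::nat) + r) mod m = (y + r) mod m \<longleftrightarrow> x mod m = y mod m"
  by (simp add: nat_mod_eq_iff)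

lemma inj_on_add_mod: "inj_on (\<lambda>i. (i + r) mod m) {..<m::nat}"
proof (rule inj_onI)
  fix x y assume "x \<in> {..<m}" "y \<in> {..<m}" "(x + r) mod m = (y + r) mod m"
  then show "x = y"
    by (simp add: mod_add_right_cancel)
qed

lemma cycle_adj_add_mod:
  assumes "i < m" "j < m"
  shows "cycle_adj m ((i + r) mod m) ((j + r) mod m) = cycle_adj m i j"
proof -
  have "((i + r) mod m + 1) mod m = ((i + 1) + r) mod m" "((j + r) mod m + 1) mod m = ((j + 1) + r) mod m"
    by (simp_all add: mod_simps ac_simps)
  moreover have "(j + r) mod m = ((i + 1) + r) mod m \<longleftrightarrow> j = (i + 1) mod m"
    "(i + r) mod m = ((j + 1) + r) mod m \<longleftrightarrow> i = (j + 1) mod m"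
    using assms by (simp_all only: mod_add_right_cancel) simp_all
  ultimately show ?thesis
    unfolding cycle_adj_def by simp
qed

lemma ipseg_rep_cycle_shift:
  assumes "0 < m" "ipseg_rep_cycle a b m s"
  shows "ipseg_rep_cycle a b m (cyclic_shift m r s)"
  unfolding ipseg_rep_cycle_def cyclic_shift_def
proof (intro conjI allI impI)
  fix i j assume ij: "i < m" "j < m" "i \<noteq> j"
  then have "(i + r) mod m \<noteq> (j + r) mod m"
    unfolding mod_add_right_cancel by simp
  then show "seg_set (s ((i + r) mod m)) \<inter> seg_set (s ((j + r) mod m)) \<noteq> {} \<longleftrightarrow> cycle_adj m i j"
    using ipseg_rep_cycle_meets_iff[OF assms(2)] assms(1) cycle_adj_add_mod[OF ij(1,2)] by simp
qed (use ipseg_rep_cycle_seg_type[OF assms(2)] assms(1) in simp)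

lemma interval_arc_shift:
  assumes "0 < m"
  shows "interval_arc a b m (cyclic_shift m r s) i k \<longleftrightarrow> i < m \<and> interval_arc a b m s ((i + r) mod m) k"
proof -
  have "((i + j) mod m + r) mod m = ((i + r) mod m + j) mod m" for j
    by (simp add: mod_simps ac_simps)
  moreover have "((i + m - 1) mod m + r) mod m = ((i + r) mod m + m - 1) mod m"
    using assms by (cases m) (simp_all add: mod_simps ac_simps)
  ultimately show ?thesis
    unfolding interval_arc_def cyclic_shift_def using assms by auto
qed

lemma interval_arc_lengths_shift:
  assumes "0 < m"
  shows "interval_arc_lengths a b m (cyclic_shift m r s) = interval_arc_lengths a b m s"
proof -
  let ?g = "map_prod (\<lambda>i. (i + r) mod m) id"
  let ?A = "interval_arcs a b m (cyclic_shift m r s)"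
  have "?A \<subseteq> {..<m} \<times> UNIV"
    by (auto simp: interval_arcs_def interval_arc_def)
  then have inj: "inj_on ?g ?A"
    by (rule inj_on_subset[OF map_prod_inj_on[OF inj_on_add_mod inj_on_id]])
  have "?g ` ?A = interval_arcs a b m s"
  proof
    show "?g ` ?A \<subseteq> interval_arcs a b m s"
      using interval_arc_shift[OF assms] by (auto simp: interval_arcs_def)
  next
    show "interval_arcs a b m s \<subseteq> ?g ` ?A"
    proof
      fix x assume "x \<in> interval_arcs a b m s"
      then obtain i k where x: "x = (i, k)" "interval_arc a b m s i k"
        by (auto simp: interval_arcs_def)
      have "(\<lambda>i. (i + r) mod m) ` {..<m} = {..<m}"
        by (rule endo_inj_surj) (use assms inj_on_add_mod in auto)
      moreover have "i < m"
        using x by (simp add: interval_arc_def)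
      ultimately have "i \<in> (\<lambda>i. (i + r) mod m) ` {..<m}"
        by simp
      then obtain i' where "i' < m" "i = (i' + r) mod m"
        by blast
      then have "(i', k) \<in> ?A"
        using x interval_arc_shift[OF assms] by (simp add: interval_arcs_def)
      then show "x \<in> ?g ` ?A"
        by (rule rev_image_eqI) (simp add: x \<open>i = (i' + r) mod m\<close>)
    qed
  qed
  then have "mset_set (interval_arcs a b m s) = image_mset ?g (mset_set ?A)"
    using image_mset_mset_set[OF inj] by simp
  moreover have "snd \<circ> ?g = snd"
    by auto
  ultimately show ?thesis
    unfolding interval_arc_lengths_def by (simp add: multiset.map_comp)
qed

lemma final_interval_arc_of_interval_arc:
  assumes arc: "interval_arc a b m s (m - l) l" and "l < m"
  shows "final_interval_arc a b m s (m - l - 1)"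
proof -
  have l1: "1 \<le> l" and I: "\<And>j. j < l \<Longrightarrow> interval_seg a b (s ((m - l + j) mod m))"
    and P1: "perm_seg a b (s ((m - l + m - 1) mod m))" and P2: "perm_seg a b (s ((m - l + l) mod m))"
    using arc unfolding interval_arc_def by auto
  have "m - l \<noteq> 0" "m - l < m"
    using \<open>l < m\<close> l1 by auto
  note minus_one = add_minus_one_mod[OF this]
  have "interval_seg a b (s x)" if "m - l - 1 < x" "x < m" for x
    using I[of "x - (m - l)"] that by simp
  with P1 P2 \<open>l < m\<close> l1 show ?thesis
    unfolding final_interval_arc_def minus_one by auto
qed

lemma has_rep_final_interval_arc:
  assumes ab: "a \<noteq> b" and H: "has_rep_with_arc_lengths a b m (add_mset l M)"
  obtains s p where "ipseg_rep_cycle a b m s" "final_interval_arc a b m s p" "m = p + l + 1"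
    "inner_arc_lengths a b s p = M"
proof -
  obtain s0 where rep: "ipseg_rep_cycle a b m s0" and len: "interval_arc_lengths a b m s0 = add_mset l M"
    using H unfolding has_rep_with_arc_lengths_def by blast
  have "finite (interval_arcs a b m s0)"
    by (rule ccontr) (use len in \<open>simp add: interval_arc_lengths_def\<close>)
  moreover have "l \<in># image_mset snd (mset_set (interval_arcs a b m s0))"
    using len by (simp add: interval_arc_lengths_def)
  ultimately obtain x where "x \<in> interval_arcs a b m s0" "snd x = l"
    by auto
  then obtain i where arc: "interval_arc a b m s0 i l"
    by (auto simp: interval_arcs_def)
  have "i < m" "1 \<le> l" "l < m"
    using arc interval_arc_length_less[OF ab arc] by (auto simp: interval_arc_def)
  define s where "s = cyclic_shift m ((i + l) mod m) s0"
  have "0 < m"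
    using \<open>l < m\<close> by simp
  have "(m - l + (i + l) mod m) mod m = (m - l + (i + l)) mod m"
    by (rule mod_add_right_eq)
  also have "m - l + (i + l) = i + m"
    using \<open>l < m\<close> by simp
  finally have "(m - l + (i + l) mod m) mod m = i"
    using \<open>i < m\<close> by simp
  then have "interval_arc a b m s (m - l) l"
    unfolding s_def interval_arc_shift[OF \<open>0 < m\<close>] using arc \<open>1 \<le> l\<close> \<open>l < m\<close> by simp
  then have F: "final_interval_arc a b m s (m - l - 1)"
    using \<open>l < m\<close> by (rule final_interval_arc_of_interval_arc)
  have "add_mset l (inner_arc_lengths a b s (m - l - 1)) = add_mset l M"
    using interval_arc_lengths_final[OF ab F] interval_arc_lengths_shift[OF \<open>0 < m\<close>] len
      \<open>1 \<le> l\<close> \<open>l < m\<close> by (simp add: s_def)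
  moreover have "ipseg_rep_cycle a b m s"
    unfolding s_def using ipseg_rep_cycle_shift[OF \<open>0 < m\<close> rep] .
  ultimately show thesis
    using F \<open>l < m\<close> by (intro that[of s "m - l - 1"]) auto
qed

lemma has_rep_if_final_interval_arc:
  assumes ab: "a \<noteq> b" and rep: "ipseg_rep_cycle a b m s" and F: "final_interval_arc a b m s p"
  shows "has_rep_with_arc_lengths a b m (add_mset (m - 1 - p) (inner_arc_lengths a b s p))"
proof -
  have "m - 1 < m" "0 < m" "interval_seg a b (s (m - 1))" "perm_seg a b (s 0)"
    using F by (auto simp: final_interval_arc_def)
  then show ?thesis
    unfolding has_rep_with_arc_lengths_def interval_arc_lengths_final[OF ab F, symmetric]
    using rep by blast
qed

section \<open>Shortening and lengthening one arc\<close>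

lemma ipseg_rep_cycle_contract:
  assumes rep: "ipseg_rep_cycle a b (m + 1) s" and m3: "3 \<le> m"
    and Z: "interval_seg a b Z \<or> perm_seg a b Z"
    and union: "seg_set Z = seg_set (s (m - 1)) \<union> seg_set (s m)"
  shows "ipseg_rep_cycle a b m (s(m - 1 := Z))"
proof (rule ipseg_rep_cycleI)
  fix i assume "i < m"
  then show "interval_seg a b ((s(m - 1 := Z)) i) \<or> perm_seg a b ((s(m - 1 := Z)) i)"
    using ipseg_rep_cycle_seg_type[OF rep, of i] Z by auto
next
  fix i j assume ij: "i < j" "j < m"
  show "seg_set ((s(m - 1 := Z)) i) \<inter> seg_set ((s(m - 1 := Z)) j) \<noteq> {} \<longleftrightarrow> cycle_adj m i j"
  proof (cases "j < m - 1")
    case True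
    then have "cycle_adj (m + 1) i j = cycle_adj m i j"
      using ij by (simp add: cycle_adj_iff)
    then show ?thesis
      using ipseg_rep_cycle_meets_iff[OF rep, of i j] ij True by simp
  next
    case False
    then have j: "j = m - 1" and i: "i < m - 1"
      using ij by auto
    have "seg_set ((s(m - 1 := Z)) i) \<inter> seg_set ((s(m - 1 := Z)) j) \<noteq> {} \<longleftrightarrow>
        seg_set (s i) \<inter> seg_set (s (m - 1)) \<noteq> {} \<or> seg_set (s i) \<inter> seg_set (s m) \<noteq> {}"
      using i j union by auto
    also have "\<dots> \<longleftrightarrow> cycle_adj (m + 1) i (m - 1) \<or> cycle_adj (m + 1) i m"
      using ipseg_rep_cycle_meets_iff[OF rep] i m3 by simp
    also have "\<dots> \<longleftrightarrow> cycle_adj m i j"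
      using i j m3 by (simp add: cycle_adj_iff) arith
    finally show ?thesis .
  qed
qed

lemma ipseg_rep_cycle_subdivide:
  assumes rep: "ipseg_rep_cycle a b m s" and m4: "4 \<le> m"
    and X1: "interval_seg a b X1 \<or> perm_seg a b X1" and X2: "interval_seg a b X2 \<or> perm_seg a b X2"
    and split: "splits_between (s (m - 1)) (s (m - 2)) (s 0) X1 X2"
  shows "ipseg_rep_cycle a b (m + 1) (s(m - 1 := X1, m := X2))" (is "ipseg_rep_cycle a b _ ?s")
proof (rule ipseg_rep_cycleI)
  fix i assume "i < m + 1"
  then show "interval_seg a b (?s i) \<or> perm_seg a b (?s i)"
    using ipseg_rep_cycle_seg_type[OF rep, of i] X1 X2 by auto
next
  have meets: "seg_set (s i) \<inter> seg_set (s j) \<noteq> {} \<longleftrightarrow> cycle_adj m i j"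
    if "i < j" "j < m" for i j
    using ipseg_rep_cycle_meets_iff[OF rep, of i j] that by simp
  have far: "seg_set (s i) \<inter> seg_set (s (m - 1)) = {}" if "0 < i" "i < m - 2" for i
  proof -
    have "\<not> cycle_adj m i (m - 1)"
      using that m4 by (simp add: cycle_adj_iff) arith
    moreover have "i < m - 1"
      using that by simp
    ultimately show ?thesis
      using meets[of i "m - 1"] m4 by simp
  qed
  have sub: "seg_set X1 \<subseteq> seg_set (s (m - 1))" "seg_set X2 \<subseteq> seg_set (s (m - 1))"
    and X12: "seg_set X1 \<inter> seg_set X2 \<noteq> {}"
    and JX1: "seg_set (s (m - 2)) \<inter> seg_set X1 \<noteq> {}" and KX1: "seg_set (s 0) \<inter> seg_set X1 = {}"
    and KX2: "seg_set (s 0) \<inter> seg_set X2 \<noteq> {}" and JX2: "seg_set (s (m - 2)) \<inter> seg_set X2 = {}"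
    using split unfolding splits_between_def by blast+
  have s_lt: "?s i = s i" if "i < m - 1" for i
    using that by auto
  have s_m1: "?s (m - 1) = X1" and s_m: "?s m = X2"
    using m4 by auto
  fix i j assume ij: "i < j" "j < m + 1"
  consider "j < m - 1" | "j = m - 1" "i = 0" | "j = m - 1" "0 < i" "i < m - 2" | "j = m - 1" "i = m - 2"
    | "j = m" "i = 0" | "j = m" "0 < i" "i < m - 2" | "j = m" "i = m - 2" | "j = m" "i = m - 1"
    using ij m4 by (cases "j < m - 1"; cases "j = m"; cases "i = 0"; cases "i < m - 2"; cases "i = m - 2") auto
  then show "seg_set (?s i) \<inter> seg_set (?s j) \<noteq> {} \<longleftrightarrow> cycle_adj (m + 1) i j"
  proof cases
    case 1
    moreover have "cycle_adj (m + 1) i j = cycle_adj m i j"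
      using 1 ij by (simp add: cycle_adj_iff) arith
    ultimately show ?thesis
      using meets[of i j] ij s_lt by simp
  next
    case 2
    then show ?thesis
      using KX1 m4 s_lt s_m1 by (auto simp: cycle_adj_iff)
  next
    case 3
    then show ?thesis
      using far[of i] sub m4 s_lt s_m1 by (auto simp: cycle_adj_iff)
  next
    case 4
    then show ?thesis
      using JX1 m4 s_lt s_m1 by (auto simp: cycle_adj_iff)
  next
    case 5
    then show ?thesis
      using KX2 m4 s_lt s_m by (auto simp: cycle_adj_iff)
  next
    case 6
    then show ?thesis
      using far[of i] sub m4 s_lt s_m by (auto simp: cycle_adj_iff)
  next
    case 7
    then show ?thesis
      using JX2 m4 s_lt s_m by (auto simp: cycle_adj_iff)
  next
    case 8
    then show ?thesis
      using X12 m4 s_m1 s_m by (auto simp: cycle_adj_iff)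
  qed
qed

lemma has_rep_shorten_arc:
  assumes ab: "a \<noteq> b" and m3: "3 \<le> m" and l1: "1 \<le> l"
    and H: "has_rep_with_arc_lengths a b (m + 1) (add_mset (l + 1) M)"
  shows "has_rep_with_arc_lengths a b m (add_mset l M)"
proof -
  obtain s p where rep: "ipseg_rep_cycle a b (m + 1) s" and F: "final_interval_arc a b (m + 1) s p"
    and mp: "m + 1 = p + (l + 1) + 1" and inner: "inner_arc_lengths a b s p = M"
    using has_rep_final_interval_arc[OF ab H] .
  have X: "interval_seg a b (s (m - 1))" and Y: "interval_seg a b (s m)"
    using F mp l1 by (auto simp: final_interval_arc_def)
  have "seg_set (s (m - 1)) \<inter> seg_set (s m) \<noteq> {}"
    using ipseg_rep_cycle_meets_iff[OF rep, of "m - 1" m] m3 by (simp add: cycle_adj_iff)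
  then obtain Z where Z: "interval_seg a b Z" "seg_set Z = seg_set (s (m - 1)) \<union> seg_set (s m)"
    using interval_seg_union[OF X Y] by blast
  let ?s = "s(m - 1 := Z)"
  have "ipseg_rep_cycle a b m ?s"
    using ipseg_rep_cycle_contract[OF rep m3] Z by blast
  moreover have "final_interval_arc a b m ?s p"
    using F Z(1) mp l1 by (auto simp: final_interval_arc_def)
  moreover have "inner_arc_lengths a b ?s p = M"
    using inner mp l1 by (subst inner_arc_lengths_cong) auto
  ultimately show ?thesis
    using has_rep_if_final_interval_arc[OF ab] mp by fastforce
qed

lemma has_rep_lengthen_arc:
  assumes ab: "a \<noteq> b" and m4: "4 \<le> m" and l1: "1 \<le> l"
    and H: "has_rep_with_arc_lengths a b m (add_mset l M)"
  shows "has_rep_with_arc_lengths a b (m + 1) (add_mset (l + 1) M)"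
proof -
  obtain s p where rep: "ipseg_rep_cycle a b m s" and F: "final_interval_arc a b m s p"
    and mp: "m = p + l + 1" and inner: "inner_arc_lengths a b s p = M"
    using has_rep_final_interval_arc[OF ab H] .
  have X: "interval_seg a b (s (m - 1))"
    using F mp l1 by (auto simp: final_interval_arc_def)
  have J: "interval_seg a b (s (m - 2)) \<or> perm_seg a b (s (m - 2))"
    and K: "interval_seg a b (s 0) \<or> perm_seg a b (s 0)"
    using ipseg_rep_cycle_seg_type[OF rep] m4 by auto
  have "m - 1 \<noteq> m - 2" "m - 2 \<noteq> 0" "m - 1 \<noteq> 0" "m - 2 < m" "m - 1 < m"
    using m4 by auto
  moreover have "cycle_adj m (m - 1) (m - 2)" "cycle_adj m (m - 1) 0" "\<not> cycle_adj m (m - 2) 0"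
    using m4 by (auto simp: cycle_adj_iff)
  ultimately have XJ: "seg_set (s (m - 1)) \<inter> seg_set (s (m - 2)) \<noteq> {}"
    and XK: "seg_set (s (m - 1)) \<inter> seg_set (s 0) \<noteq> {}"
    and JK: "seg_set (s (m - 2)) \<inter> seg_set (s 0) = {}"
    using ipseg_rep_cycle_meets_iff[OF rep, of "m - 1" "m - 2"]
      ipseg_rep_cycle_meets_iff[OF rep, of "m - 1" 0] ipseg_rep_cycle_meets_iff[OF rep, of "m - 2" 0]
    by simp_all
  obtain X1 X2 where X12: "interval_seg a b X1" "interval_seg a b X2"
    and split: "splits_between (s (m - 1)) (s (m - 2)) (s 0) X1 X2"
    using interval_seg_split[OF ab X J K XJ XK JK] by blast
  let ?s = "s(m - 1 := X1, m := X2)"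
  have "ipseg_rep_cycle a b (m + 1) ?s"
    using ipseg_rep_cycle_subdivide[OF rep m4 _ _ split] X12 by blast
  moreover have "final_interval_arc a b (m + 1) ?s p"
    using F X12 mp l1 by (auto simp: final_interval_arc_def)
  moreover have "inner_arc_lengths a b ?s p = M"
    using inner mp l1 by (subst inner_arc_lengths_cong) auto
  ultimately show ?thesis
    using has_rep_if_final_interval_arc[OF ab] mp by fastforce
qed

lemma has_rep_triangle_single_arc:
  assumes "a \<noteq> b" "has_rep_with_arc_lengths a b 3 (add_mset 1 M)"
  shows "M = {#}"
proof -
  obtain s p where "3 = p + 1 + 1" "inner_arc_lengths a b s p = M"
    using has_rep_final_interval_arc[OF assms] by metis
  then show ?thesis
    by (simp add: inner_arc_lengths_def inner_arcs_le_one)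
qed

lemma has_rep_cycle4_arc2:
  assumes ab: "a \<noteq> b"
  shows "has_rep_with_arc_lengths a b 4 {#2#}"
proof -
  define s :: "nat \<Rightarrow> seg" where "s = (!) [((0, a), (2, b)), ((2, a), (0, b)), ((1, a), (2, a)), ((0, a), (1, a))]"
  have s: "s 0 = ((0, a), (2, b))" "s 1 = ((2, a), (0, b))" "s 2 = ((1, a), (2, a))" "s 3 = ((0, a), (1, a))"
    by (simp_all add: s_def numeral_eq_Suc)
  have types: "perm_seg a b (s 0)" "perm_seg a b (s 1)" "interval_seg a b (s 2)" "interval_seg a b (s 3)"
    unfolding s by (simp_all add: perm_seg_def interval_seg_def)
  have tr: "line_trace a (s 0) = {0}" "line_trace a (s 1) = {2}" "line_trace a (s 3) = {0..1}"
    unfolding s using line_trace_transversal[OF ab]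
    by (simp_all add: line_trace_horizontal closed_segment_eq_real_ivl)
  have "midpoint (2, a) (0, b) = midpoint (0::real, a) (2, b)"
    by (simp add: midpoint_def)
  then have "midpoint (0::real, a) (2, b) \<in> closed_segment (0, a) (2, b) \<inter> closed_segment (2, a) (0, b)"
    by (metis IntI midpoint_in_closed_segment)
  then have "seg_set (s 0) \<inter> seg_set (s 1) \<noteq> {}"
    unfolding s seg_set_def fst_conv snd_conv by blast
  moreover have "seg_set (s 2) \<inter> seg_set (s 0) = {}" "seg_set (s 2) \<inter> seg_set (s 1) \<noteq> {}"
    "seg_set (s 2) \<inter> seg_set (s 3) \<noteq> {}"
    using horizontal_Int_eq_empty_iff[of 1 a 2] tr unfolding s
    by (simp_all add: closed_segment_eq_real_ivl)
  moreover have "seg_set (s 3) \<inter> seg_set (s 0) \<noteq> {}" "seg_set (s 3) \<inter> seg_set (s 1) = {}"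
    using horizontal_Int_eq_empty_iff[of 0 a 1] tr unfolding s
    by (simp_all add: closed_segment_eq_real_ivl)
  ultimately have meets: "seg_set (s i) \<inter> seg_set (s j) \<noteq> {} \<longleftrightarrow> cycle_adj 4 i j"
    if "(i, j) \<in> {(0, 1), (0, 2), (0, 3), (1, 2), (1, 3), (2, 3)}" for i j
    using that by (auto simp: cycle_adj_iff Int_commute)
  have rep: "ipseg_rep_cycle a b 4 s"
  proof (rule ipseg_rep_cycleI)
    fix i :: nat assume "i < 4"
    then have "i = 0 \<or> i = 1 \<or> i = 2 \<or> i = 3" by arith
    then show "interval_seg a b (s i) \<or> perm_seg a b (s i)"
      using types by auto
  next
    fix i j :: nat assume "i < j" "j < 4"
    then have "(i, j) \<in> {(0, 1), (0, 2), (0, 3), (1, 2), (1, 3), (2, 3)}" by auto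
    then show "seg_set (s i) \<inter> seg_set (s j) \<noteq> {} \<longleftrightarrow> cycle_adj 4 i j"
      by (rule meets)
  qed
  have "final_interval_arc a b 4 s 1"
    unfolding final_interval_arc_def using types by (auto simp: less_Suc_eq numeral_eq_Suc)
  from has_rep_if_final_interval_arc[OF ab rep this] show ?thesis
    by (simp add: inner_arc_lengths_def inner_arcs_le_one)
qed

lemma has_rep_lengthen_arc_iff:
  assumes ab: "a \<noteq> b" and m3: "3 \<le> m" and l1: "1 \<le> l" and "m = 3 \<longrightarrow> l = 1"
  shows "has_rep_with_arc_lengths a b (m + 1) (add_mset (l + 1) M) \<longleftrightarrow>
    has_rep_with_arc_lengths a b m (add_mset l M)"
proof
  assume "has_rep_with_arc_lengths a b (m + 1) (add_mset (l + 1) M)"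
  then show "has_rep_with_arc_lengths a b m (add_mset l M)"
    by (rule has_rep_shorten_arc[OF ab m3 l1])
next
  assume H: "has_rep_with_arc_lengths a b m (add_mset l M)"
  show "has_rep_with_arc_lengths a b (m + 1) (add_mset (l + 1) M)"
  proof (cases "m = 3")
    case True
    with H assms(4) have "M = {#}"
      using has_rep_triangle_single_arc[OF ab] by simp
    with True assms(4) show ?thesis
      using has_rep_cycle4_arc2[OF ab] by (simp add: numeral_eq_Suc)
  next
    case False
    with m3 show ?thesis
      using has_rep_lengthen_arc[OF ab _ l1 H] by simp
  qed
qed

lemma has_rep_shrink_arc_iff:
  assumes ab: "a \<noteq> b" and m3: "3 \<le> m"
  shows "has_rep_with_arc_lengths a b (m + k) (add_mset (k + 1) M) \<longleftrightarrow>
    has_rep_with_arc_lengths a b m (add_mset 1 M)"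
proof (induction k)
  case (Suc k)
  have "has_rep_with_arc_lengths a b (m + k + 1) (add_mset (k + 1 + 1) M) \<longleftrightarrow>
      has_rep_with_arc_lengths a b (m + k) (add_mset (k + 1) M)"
    using m3 by (intro has_rep_lengthen_arc_iff[OF ab]) auto
  with Suc.IH show ?case
    by simp
qed simp

lemma has_rep_shrink_arcs_iff:
  assumes ab: "a \<noteq> b" and m3: "3 \<le> m" and pos: "\<forall>l\<in>#L. 1 \<le> l"
  shows "has_rep_with_arc_lengths a b (m + (\<Sum>l\<in>#L. l - 1)) (L + N) \<longleftrightarrow>
    has_rep_with_arc_lengths a b m (replicate_mset (size L) 1 + N)"
  using pos
proof (induction L arbitrary: N)
  case (add l L)
  then obtain k where l: "l = k + 1"
    by (metis add.commute le_Suc_ex union_single_eq_member)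
  have "has_rep_with_arc_lengths a b (m + (\<Sum>l\<in>#add_mset l L. l - 1)) (add_mset l L + N) \<longleftrightarrow>
      has_rep_with_arc_lengths a b (m + (\<Sum>l\<in>#L. l - 1) + k) (add_mset (k + 1) (L + N))"
    by (simp add: l ac_simps)
  also have "\<dots> \<longleftrightarrow> has_rep_with_arc_lengths a b (m + (\<Sum>l\<in>#L. l - 1)) (add_mset 1 (L + N))"
    using m3 by (intro has_rep_shrink_arc_iff[OF ab]) simp
  also have "\<dots> \<longleftrightarrow> has_rep_with_arc_lengths a b m (replicate_mset (size L) 1 + add_mset 1 N)"
    using add.IH[of "add_mset 1 N"] add.prems by simp
  finally show ?case
    by simp
qed simp

theorem mainTheorem4:
  fixes a b :: real and n t :: nat and ls :: "nat list"
  assumes "a \<noteq> b"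
    and "n \<ge> 4" and "t \<ge> 1"
    and "length ls = t" and "\<forall>l\<in>set ls. l \<ge> 1"
    and "(\<Sum>l\<leftarrow>ls. l - 1) + 3 \<le> n"
  shows "has_rep_with_interval_arcs a b n ls \<longleftrightarrow>
         has_rep_with_interval_arcs a b (n - (\<Sum>l\<leftarrow>ls. l - 1)) (replicate t 1)"
proof -
  let ?d = "\<Sum>l\<leftarrow>ls. l - 1"
  have d: "?d = (\<Sum>l\<in>#mset ls. l - 1)"
    by (metis mset_map sum_mset_sum_list)
  have "has_rep_with_arc_lengths a b (n - ?d + ?d) (mset ls + {#}) \<longleftrightarrow>
      has_rep_with_arc_lengths a b (n - ?d) (replicate_mset (size (mset ls)) 1 + {#})"
    unfolding d using assms(1,5,6) d by (intro has_rep_shrink_arcs_iff) auto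
  then show ?thesis
    using assms(4,6) by (simp add: has_rep_with_interval_arcs_iff)
qed

end
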